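(* Consider an operational theory with six preparation procedures $P_{t,b}$ ($t\in\{1,2,3\}$, $b\in\{0,1\}$) and three binary-outcome measurement procedures $M_y$ ($y\in\{1,2,3\}$). Let $P_t$ denote the preparation obtained by implementing $P_{t,0}$ or $P_{t,1}$ with probability $\tfrac12$ each, and assume trit-obliviousness: $p(X|M;P_1)=p(X|M;P_2)=p(X|M;P_3)$ for every measurement procedure $M$ of the theory. Define $c_y(t,b)=b$ if $t=y$ and $c_y(t,b)=b\oplus1$ if $t\neq y$, and $R_3=\frac1{18}\sum_{t,b,y}p(X=c_y(t,b)|M_y;P_{t,b})$. Then in any preparation-noncontextual ontological model reproducing these statistics, $R_3\leq\frac79$. Moreover, quantum theory violates this bound: for a qubit, with $\hat A_t=\cos\frac{2\pi(t-1)}{3}\sigma_z+\sin\frac{2\pi(t-1)}{3}\sigma_x$, taking $P_{t,b}$ to be the eigenstate of $\hat A_t$ with eigenvalue $(-1)^b$ and $M_y$ the measurement of $\hat A_y$ with outcome $X=0$ for eigenvalue $+1$ and $X=1$ for $-1$, the mixtures $P_t$ all equal the maximally mixed state $\mathbf{1}/2$ (so trit-obliviousness holds) and $R_3=\frac56$.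
   Context: An ontological model of an operational theory specifies ontic states $\lambda$, a distribution $p(\lambda|P)$ for each preparation procedure and a response function $p(X|M;\lambda)$ for each measurement procedure, with $p(X|M;P)=\sum_\lambda p(X|M;\lambda)p(\lambda|P)$; a probabilistic mixture of preparation procedures is represented by the corresponding mixture of their distributions. The model is preparation-noncontextual if any two preparation procedures that give the same outcome statistics for all measurements are represented by the same distribution $p(\lambda|P)$. *)

theory Defs
  imports "HOL-Probability.Probability"
begin

definition cfun :: "nat \<Rightarrow> nat \<Rightarrow> nat \<Rightarrow> nat" where
  "cfun y t b = (if t = y then b else 1 - b)"

definition model_prob :: "('p \<Rightarrow> 'l pmf) \<Rightarrow> ('m \<Rightarrow> 'l \<Rightarrow> nat pmf) \<Rightarrow> 'p \<Rightarrow> 'm \<Rightarrow> nat \<Rightarrow> real" where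
  "model_prob mu xi P M x = measure_pmf.expectation (mu P) (\<lambda>l. pmf (xi M l) x)"

definition prep_noncontextual ::
  "('p \<Rightarrow> 'm \<Rightarrow> nat \<Rightarrow> real) \<Rightarrow> ('p \<Rightarrow> 'l pmf) \<Rightarrow> bool" where
  "prep_noncontextual stat mu \<longleftrightarrow>
     (\<forall>P P'. (\<forall>M x. stat P M x = stat P' M x) \<longrightarrow> mu P = mu P')"

definition msc :: "complex \<Rightarrow> complex^2^2 \<Rightarrow> complex^2^2" where
  "msc c A = (\<chi> i j. c * A $ i $ j)"

definition sigma_z :: "complex^2^2" where
  "sigma_z = (\<chi> i j. if i = j then (if i = 1 then 1 else -1) else 0)"

definition sigma_x :: "complex^2^2" where
  "sigma_x = (\<chi> i j. if i = j then 0 else 1)"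

definition Aobs :: "nat \<Rightarrow> complex^2^2" where
  "Aobs t = msc (complex_of_real (cos (2 * pi * (real t - 1) / 3))) sigma_z
          + msc (complex_of_real (sin (2 * pi * (real t - 1) / 3))) sigma_x"

text \<open>Spectral projector of the +-1-valued observable A onto eigenvalue (-1)^x.\<close>
definition eigproj :: "complex^2^2 \<Rightarrow> nat \<Rightarrow> complex^2^2" where
  "eigproj A x = msc (1/2) (mat 1 + msc ((-1) ^ x) A)"

definition cinner :: "complex^2 \<Rightarrow> complex^2 \<Rightarrow> complex" where
  "cinner u v = (\<Sum>i\<in>UNIV. cnj (u $ i) * v $ i)"

definition born :: "complex^2 \<Rightarrow> complex^2^2 \<Rightarrow> nat \<Rightarrow> real" where
  "born psi A x = Re (cinner psi (eigproj A x *v psi))"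

definition density :: "complex^2 \<Rightarrow> complex^2^2" where
  "density psi = (\<chi> i j. psi $ i * cnj (psi $ j))"

end

theory Submission
  imports Defs
begin

text \<open>
  Trit-obliviousness makes the mixtures \<open>P\<^sub>1, P\<^sub>2, P\<^sub>3\<close> operationally equivalent, so preparation
  noncontextuality represents them all by one distribution \<open>\<nu>\<close> over ontic states. As
  \<open>\<mu>(P\<^sub>t) = (\<mu>(P\<^sub>t\<^sub>,\<^sub>0) + \<mu>(P\<^sub>t\<^sub>,\<^sub>1))/2\<close>, the total score of \<open>P\<^sub>t\<^sub>,\<^sub>0\<close> and \<open>P\<^sub>t\<^sub>,\<^sub>1\<close> is at most twice the
  \<open>\<nu>\<close>-average of the better of the two scores an ontic state achieves for them. In every ontic
  state these three best scores sum to at most 7, a piecewise-linear bound in the three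
  response probabilities; hence \<open>R\<^sub>3 \<le> 2\<cdot>7/18 = 7/9\<close>.

  On the quantum side \<open>A\<^sub>t\<close> is the reflection with Bloch angle \<open>\<theta>\<^sub>t = 2\<pi>(t-1)/3\<close>: its two
  eigenprojectors sum to the identity, and an eigenstate of \<open>A\<^sub>t\<close> gives the target outcome of
  \<open>M\<^sub>y\<close> with probability \<open>(1 + |cos(\<theta>\<^sub>y - \<theta>\<^sub>t)|)/2\<close>, i.e. 1 for \<open>y = t\<close> and 3/4 otherwise,
  so \<open>R\<^sub>3 = (6 + 12\<cdot>3/4)/18 = 5/6\<close>.
\<close>

lemma expectation_pmf_count_space:
  fixes f :: "'a \<Rightarrow> real"
  assumes "\<And>x. \<bar>f x\<bar> \<le> B"
  shows "measure_pmf.expectation p f = (\<integral>x. pmf p x * f x \<partial>count_space UNIV)"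
    and "integrable (count_space UNIV) (\<lambda>x. pmf p x * f x)"
proof -
  show "measure_pmf.expectation p f = (\<integral>x. pmf p x * f x \<partial>count_space UNIV)"
    unfolding measure_pmf_eq_density by (subst integral_real_density) auto
  have "integrable (measure_pmf p) f"
    by (rule measure_pmf.integrable_const_bound[where B=B]) (auto simp: assms)
  then show "integrable (count_space UNIV) (\<lambda>x. pmf p x * f x)"
    unfolding measure_pmf_eq_density by (subst (asm) integrable_real_density) auto
qed

lemma expectation_pmf_combination:
  fixes f :: "'a \<Rightarrow> real"
  assumes bounded: "\<And>x. \<bar>f x\<bar> \<le> B"
    and combination: "\<And>x. pmf r x = a * pmf p x + c * pmf q x"
  shows "measure_pmf.expectation r f
           = a * measure_pmf.expectation p f + c * measure_pmf.expectation q f"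
proof -
  note E = expectation_pmf_count_space[OF bounded]
  have "measure_pmf.expectation r f
      = (\<integral>x. a * (pmf p x * f x) + c * (pmf q x * f x) \<partial>count_space UNIV)"
    by (simp add: E combination algebra_simps)
  also have "\<dots> = a * (\<integral>x. pmf p x * f x \<partial>count_space UNIV)
                 + c * (\<integral>x. pmf q x * f x \<partial>count_space UNIV)"
    using E(2)[of p] E(2)[of q] by simp
  finally show ?thesis by (simp add: E)
qed

lemma expectation_le_half_mixture_max:
  fixes f g :: "'a \<Rightarrow> real"
  assumes "\<And>x. \<bar>f x\<bar> \<le> B" "\<And>x. \<bar>g x\<bar> \<le> B"
    and "\<And>x. pmf r x = (1/2) * pmf p x + (1/2) * pmf q x"
  shows "measure_pmf.expectation p f + measure_pmf.expectation q g
           \<le> 2 * measure_pmf.expectation r (\<lambda>x. max (f x) (g x))"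
proof -
  have bounded: "\<bar>max (f x) (g x)\<bar> \<le> B" for x
    using assms(1,2)[of x] by linarith
  have "measure_pmf.expectation p f + measure_pmf.expectation q g
      \<le> measure_pmf.expectation p (\<lambda>x. max (f x) (g x))
       + measure_pmf.expectation q (\<lambda>x. max (f x) (g x))"
    by (intro add_mono integral_mono measure_pmf.integrable_const_bound[where B=B])
       (auto simp: assms(1,2) bounded)
  also have "\<dots> = 2 * measure_pmf.expectation r (\<lambda>x. max (f x) (g x))"
    using expectation_pmf_combination[OF bounded assms(3)] by simp
  finally show ?thesis .
qed

lemma pmf_binary_one: "set_pmf p \<subseteq> {0, 1::nat} \<Longrightarrow> pmf p 1 = 1 - pmf p 0"
  using sum_pmf_eq_1[of "{0,1::nat}" p] by simp

text \<open>\<open>r\<^sub>y\<close> is the probability of outcome 0 of \<open>M\<^sub>y\<close> in a fixed ontic state; the \<open>t\<close>-th maximum is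
  the better of the two scores that state achieves for \<open>P\<^sub>t\<^sub>,\<^sub>0\<close> and \<open>P\<^sub>t\<^sub>,\<^sub>1\<close>.\<close>
lemma sum_max_scores_le_7:
  fixes r1 r2 r3 :: real
  assumes "0 \<le> r1" "r1 \<le> 1" "0 \<le> r2" "r2 \<le> 1" "0 \<le> r3" "r3 \<le> 1"
  shows "max (r1 + (1 - r2) + (1 - r3)) ((1 - r1) + r2 + r3)
       + max ((1 - r1) + r2 + (1 - r3)) (r1 + (1 - r2) + r3)
       + max ((1 - r1) + (1 - r2) + r3) (r1 + r2 + (1 - r3)) \<le> 7"
  using assms by (simp add: max_def)

lemma noncontextual_mixtures_equal:
  assumes "prep_noncontextual stat mu"
    and "\<forall>M x. stat (Mix 1) M x = stat (Mix 2) M x \<and> stat (Mix 2) M x = stat (Mix 3) M x"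
    and "t \<in> {1,2,3::nat}"
  shows "mu (Mix t) = mu (Mix 1)"
  using assms unfolding prep_noncontextual_def by (metis empty_iff insert_iff)

lemma oblivious_score_le_14:
  fixes rho :: "nat \<Rightarrow> nat \<Rightarrow> 'l pmf" and resp :: "nat \<Rightarrow> 'l \<Rightarrow> nat pmf"
  assumes binary: "\<forall>y\<in>{1,2,3}. \<forall>l. set_pmf (resp y l) \<subseteq> {0, 1}"
    and oblivious: "\<forall>t\<in>{1,2,3}. \<forall>l. pmf nu l = (1/2) * pmf (rho t 0) l + (1/2) * pmf (rho t 1) l"
  shows "(\<Sum>t\<in>{1,2,3}. \<Sum>b\<in>{0,1}. \<Sum>y\<in>{1,2,3}.
            measure_pmf.expectation (rho t b) (\<lambda>l. pmf (resp y l) (cfun y t b))) \<le> 14"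
proof -
  define score where "score t b l = (\<Sum>y\<in>{1,2,3::nat}. pmf (resp y l) (cfun y t b))" for t b l
  have score_range: "0 \<le> score t b l \<and> score t b l \<le> 3" for t b l
  proof
    show "0 \<le> score t b l" unfolding score_def by (intro sum_nonneg) auto
    have "score t b l \<le> (\<Sum>y\<in>{1,2,3::nat}. 1)"
      unfolding score_def by (intro sum_mono) (simp add: pmf_le_1)
    then show "score t b l \<le> 3" by simp
  qed
  then have score_bounded: "\<bar>score t b l\<bar> \<le> 3" for t b l
    by (simp add: abs_le_iff)
  define best where "best l = (\<Sum>t\<in>{1,2,3::nat}. max (score t 0 l) (score t 1 l))" for l
  have best_le_7: "best l \<le> 7" for l
  proof -
    have resp_one: "pmf (resp y l) 1 = 1 - pmf (resp y l) 0" if "y \<in> {1,2,3}" for y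
      using pmf_binary_one binary that by blast
    show ?thesis
      using sum_max_scores_le_7[of "pmf (resp 1 l) 0" "pmf (resp 2 l) 0" "pmf (resp 3 l) 0"]
        resp_one[of 1] resp_one[of 2] resp_one[of 3]
      by (simp add: best_def score_def cfun_def pmf_le_1 algebra_simps)
  qed
  have best_bounded: "\<bar>best l\<bar> \<le> 9" for l
  proof -
    have max_range: "0 \<le> max (score t 0 l) (score t 1 l) \<and> max (score t 0 l) (score t 1 l) \<le> 3" for t
      using score_range[of t 0 l] score_range[of t 1 l] by linarith
    have "best l = max (score 1 0 l) (score 1 1 l) + max (score 2 0 l) (score 2 1 l)
                 + max (score 3 0 l) (score 3 1 l)"
      by (simp add: best_def)
    then show ?thesis
      unfolding abs_le_iff using max_range[of 1] max_range[of 2] max_range[of 3] by linarith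
  qed
  have "(\<Sum>t\<in>{1,2,3}. \<Sum>b\<in>{0,1}. \<Sum>y\<in>{1,2,3}.
            measure_pmf.expectation (rho t b) (\<lambda>l. pmf (resp y l) (cfun y t b)))
      = (\<Sum>t\<in>{1,2,3::nat}. measure_pmf.expectation (rho t 0) (score t 0)
                            + measure_pmf.expectation (rho t 1) (score t 1))"
    unfolding score_def
    by (simp add: Bochner_Integration.integral_sum
                  measure_pmf.integrable_const_bound[where B=1] pmf_le_1)
  also have "\<dots> \<le> (\<Sum>t\<in>{1,2,3::nat}. 2 * measure_pmf.expectation nu
                                        (\<lambda>l. max (score t 0 l) (score t 1 l)))"
    using oblivious
    by (intro sum_mono expectation_le_half_mixture_max[OF score_bounded score_bounded]) auto
  also have "\<dots> = 2 * measure_pmf.expectation nu best"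
    unfolding best_def
    by (simp add: sum_distrib_left Bochner_Integration.integral_sum
                  measure_pmf.integrable_const_bound[where B=3] score_bounded)
  also have "\<dots> \<le> 2 * measure_pmf.expectation nu (\<lambda>_. 7)"
    by (intro mult_left_mono integral_mono measure_pmf.integrable_const_bound[where B=9])
       (auto simp: best_le_7 best_bounded)
  finally show ?thesis by simp
qed

definition obs_angle :: "nat \<Rightarrow> real" where
  "obs_angle t = 2 * pi * (real t - 1) / 3"

lemma Aobs_mult_vec:
  "(Aobs t *v v) $ 1 = of_real (cos (obs_angle t)) * v $ 1 + of_real (sin (obs_angle t)) * v $ 2"
  "(Aobs t *v v) $ 2 = of_real (sin (obs_angle t)) * v $ 1 - of_real (cos (obs_angle t)) * v $ 2"
  by (simp_all add: matrix_vector_mult_def Aobs_def msc_def sigma_z_def sigma_x_def sum_2 obs_angle_def)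

lemma eigproj_mult_vec: "(eigproj A x *v v) $ i = (1/2) * (v $ i + (-1) ^ x * (A *v v) $ i)"
  using exhaust_2[of i]
  by (auto simp: matrix_vector_mult_def eigproj_def msc_def sum_2 mat_def algebra_simps)

lemma cinner_2: "cinner u v = cnj (u $ 1) * v $ 1 + cnj (u $ 2) * v $ 2"
  by (simp add: cinner_def sum_2)

lemma cos_obs_angle_diff:
  assumes "t \<in> {1,2,3}" "y \<in> {1,2,3}"
  shows "cos (obs_angle y - obs_angle t) = (if y = t then 1 else -1/2)"
proof -
  txt \<open>\<open>Suc 0\<close>, not \<open>1\<close>: the simplifier set of this context normalises the numeral to it.\<close>
  have angles: "obs_angle (Suc 0) = 0"
    "cos (obs_angle 2) = -1/2" "sin (obs_angle 2) = sqrt 3 / 2"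
    "cos (obs_angle 3) = -1/2" "sin (obs_angle 3) = - (sqrt 3 / 2)"
  proof -
    have "obs_angle 3 = pi / 3 + pi" by (simp add: obs_angle_def)
    then show "cos (obs_angle 3) = -1/2" "sin (obs_angle 3) = - (sqrt 3 / 2)"
      by (simp_all only: cos_add sin_add cos_60 sin_60 cos_pi sin_pi)
  qed (simp_all add: obs_angle_def cos_120 sin_120)
  show ?thesis
    using assms by (elim insertE emptyE) (simp_all add: cos_diff angles)
qed

text \<open>Here \<open>a'\<close>, \<open>c'\<close> play the role of the complex conjugates of \<open>a\<close>, \<open>c\<close>.\<close>
lemma reflection_eigvec_products:
  fixes a c a' c' s C S :: complex
  assumes sign: "s * s = 1"
    and eig: "C * a + S * c = s * a" "S * a - C * c = s * c"
    and eig': "C * a' + S * c' = s * a'" "S * a' - C * c' = s * c'"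
    and norm: "a' * a + c' * c = 1"
  shows "a' * a = (1 + s * C) / 2" "c' * c = (1 - s * C) / 2"
    "a' * c = s * S / 2" "c' * a = s * S / 2"
proof -
  have "s * (a' * a - c' * c) = (C * a' + S * c') * a - c' * (S * a - C * c)"
    using eig eig' by (simp add: algebra_simps)
  also have "\<dots> = C * (a' * a + c' * c)" by (simp add: algebra_simps)
  also have "\<dots> = C" using norm by simp
  finally have "a' * a - c' * c = s * C" using sign by (metis mult.assoc mult_1)
  then show "a' * a = (1 + s * C) / 2" "c' * c = (1 - s * C) / 2"
    using norm by (simp_all add: field_simps; algebra)+
  have "2 * s * (a' * c) = (C * a' + S * c') * c + a' * (S * a - C * c)"
    using eig eig' by (simp add: algebra_simps)
  also have "\<dots> = S * (a' * a + c' * c)" by (simp add: algebra_simps)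
  also have "\<dots> = S" using norm by simp
  finally show "a' * c = s * S / 2" using sign by (simp add: field_simps) (metis mult.assoc mult.commute mult_1)
  have "2 * s * (c' * a) = (S * a' - C * c') * a + c' * (C * a + S * c)"
    using eig eig' by (simp add: algebra_simps)
  also have "\<dots> = S * (a' * a + c' * c)" by (simp add: algebra_simps)
  also have "\<dots> = S" using norm by simp
  finally show "c' * a = s * S / 2" using sign by (simp add: field_simps) (metis mult.assoc mult.commute mult_1)
qed

lemma Aobs_eigvec_products:
  assumes norm: "cinner psi psi = 1" and eig: "Aobs t *v psi = ((-1) ^ b) *s psi"
  shows "cnj (psi $ 1) * psi $ 1 = (1 + (-1) ^ b * of_real (cos (obs_angle t))) / 2"
    "cnj (psi $ 2) * psi $ 2 = (1 - (-1) ^ b * of_real (cos (obs_angle t))) / 2"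
    "cnj (psi $ 1) * psi $ 2 = (-1) ^ b * of_real (sin (obs_angle t)) / 2"
    "cnj (psi $ 2) * psi $ 1 = (-1) ^ b * of_real (sin (obs_angle t)) / 2"
proof -
  let ?C = "of_real (cos (obs_angle t)) :: complex" and ?S = "of_real (sin (obs_angle t)) :: complex"
  have eig1: "?C * psi $ 1 + ?S * psi $ 2 = (-1) ^ b * psi $ 1"
    and eig2: "?S * psi $ 1 - ?C * psi $ 2 = (-1) ^ b * psi $ 2"
    using arg_cong[OF eig, of "\<lambda>v. v $ 1"] arg_cong[OF eig, of "\<lambda>v. v $ 2"]
    by (simp_all add: Aobs_mult_vec)
  have "?C * cnj (psi $ 1) + ?S * cnj (psi $ 2) = (-1) ^ b * cnj (psi $ 1)"
    "?S * cnj (psi $ 1) - ?C * cnj (psi $ 2) = (-1) ^ b * cnj (psi $ 2)"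
    using arg_cong[OF eig1, of cnj] arg_cong[OF eig2, of cnj] by simp_all
  moreover have "((-1) ^ b) * ((-1) ^ b) = (1::complex)" by (simp flip: power_add)
  moreover have "cnj (psi $ 1) * psi $ 1 + cnj (psi $ 2) * psi $ 2 = 1"
    using norm by (simp add: cinner_2)
  ultimately show "cnj (psi $ 1) * psi $ 1 = (1 + (-1) ^ b * ?C) / 2"
    "cnj (psi $ 2) * psi $ 2 = (1 - (-1) ^ b * ?C) / 2"
    "cnj (psi $ 1) * psi $ 2 = (-1) ^ b * ?S / 2"
    "cnj (psi $ 2) * psi $ 1 = (-1) ^ b * ?S / 2"
    using reflection_eigvec_products[OF _ eig1 eig2] by simp_all
qed

lemma born_Aobs_eigvec:
  assumes "cinner psi psi = 1" and "Aobs t *v psi = ((-1) ^ b) *s psi"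
  shows "born psi (Aobs y) x = (1 + (-1) ^ x * (-1) ^ b * cos (obs_angle y - obs_angle t)) / 2"
proof -
  let ?a = "psi $ 1" and ?c = "psi $ 2"
  have "cinner psi (eigproj (Aobs y) x *v psi)
      = (1/2) * (cnj ?a * ?a + cnj ?c * ?c)
        + (-1) ^ x / 2 * (of_real (cos (obs_angle y)) * (cnj ?a * ?a - cnj ?c * ?c)
                          + of_real (sin (obs_angle y)) * (cnj ?a * ?c + cnj ?c * ?a))"
    by (simp add: cinner_2 eigproj_mult_vec Aobs_mult_vec algebra_simps)
  also have "\<dots> = of_real ((1 + (-1) ^ x * (-1) ^ b * cos (obs_angle y - obs_angle t)) / 2)"
    unfolding Aobs_eigvec_products[OF assms] cos_diff by (simp add: field_simps)
  finally show ?thesis unfolding born_def by (metis Re_complex_of_real)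
qed

lemma born_target_outcome:
  assumes "t \<in> {1,2,3}" "y \<in> {1,2,3}" "b \<in> {0,1}"
    and "cinner psi psi = 1" "Aobs t *v psi = ((-1) ^ b) *s psi"
  shows "born psi (Aobs y) (cfun y t b) = (if y = t then 1 else 3/4)"
  using assms(3) cos_obs_angle_diff[OF assms(1,2)]
  by (auto simp: born_Aobs_eigvec[OF assms(4,5)] cfun_def)

lemma density_Aobs_eigvecs_sum:
  assumes "cinner psi0 psi0 = 1" "Aobs t *v psi0 = ((-1) ^ 0) *s psi0"
    and "cinner psi1 psi1 = 1" "Aobs t *v psi1 = ((-1) ^ 1) *s psi1"
  shows "density psi0 + density psi1 = mat 1"
proof -
  have entries: "(density psi0 + density psi1) $ i $ j
          = cnj (psi0 $ j) * psi0 $ i + cnj (psi1 $ j) * psi1 $ i" for i j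
    by (simp add: density_def mult.commute)
  show ?thesis
    unfolding vec_eq_iff forall_2 entries Aobs_eigvec_products[OF assms(1,2)] Aobs_eigvec_products[OF assms(3,4)]
    by (simp add: mat_def field_simps)
qed

definition Aobs_eigvec :: "nat \<Rightarrow> nat \<Rightarrow> complex^2" where
  "Aobs_eigvec t b = (let h = obs_angle t / 2 in
     if b = 0 then (\<chi> i. if i = 1 then of_real (cos h) else of_real (sin h))
     else (\<chi> i. if i = 1 then - of_real (sin h) else of_real (cos h)))"

lemma Aobs_eigvec_is_eigvec:
  assumes "b \<in> {0,1}"
  shows "cinner (Aobs_eigvec t b) (Aobs_eigvec t b) = 1
         \<and> Aobs t *v Aobs_eigvec t b = ((-1) ^ b) *s Aobs_eigvec t b"
proof -
  define h where "h = obs_angle t / 2"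
  have cos2: "cos (obs_angle t) = cos h ^ 2 - sin h ^ 2"
    and sin2: "sin (obs_angle t) = 2 * sin h * cos h"
    using cos_double[of h] sin_double[of h] by (simp_all add: h_def)
  have pyth: "sin h ^ 2 + cos h ^ 2 = 1" by simp
  have "(cos h ^ 2 - sin h ^ 2) * cos h + 2 * sin h * cos h * sin h = cos h"
    "2 * sin h * cos h * cos h - (cos h ^ 2 - sin h ^ 2) * sin h = sin h"
    using pyth by algebra+
  then show ?thesis
    using assms pyth
    by (auto simp: Aobs_eigvec_def Let_def h_def[symmetric] cinner_2 vec_eq_iff forall_2
          Aobs_mult_vec cos2 sin2 power2_eq_square
          simp flip: of_real_mult of_real_add of_real_diff of_real_minus)
qed

lemma noncontextual_R3_le:
  fixes Prep :: "nat \<Rightarrow> nat \<Rightarrow> 'p" and Meas :: "nat \<Rightarrow> 'm"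
  assumes reproduces: "\<forall>P M x. stat P M x = model_prob mu xi P M x"
    and binary: "\<forall>y\<in>{1,2,3}. \<forall>l. set_pmf (xi (Meas y) l) \<subseteq> {0, 1}"
    and mixture: "\<forall>t\<in>{1,2,3}. \<forall>l. pmf (mu (Mix t)) l
                    = (1/2) * pmf (mu (Prep t 0)) l + (1/2) * pmf (mu (Prep t 1)) l"
    and trit_oblivious: "\<forall>M x. stat (Mix 1) M x = stat (Mix 2) M x \<and> stat (Mix 2) M x = stat (Mix 3) M x"
    and pnc: "prep_noncontextual stat mu"
  shows "(1/18) * (\<Sum>t\<in>{1,2,3}. \<Sum>b\<in>{0,1}. \<Sum>y\<in>{1,2,3}. stat (Prep t b) (Meas y) (cfun y t b)) \<le> 7/9"
proof -
  have oblivious: "\<forall>t\<in>{1,2,3}. \<forall>l.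
      pmf (mu (Mix 1)) l = (1/2) * pmf (mu (Prep t 0)) l + (1/2) * pmf (mu (Prep t 1)) l"
    using mixture noncontextual_mixtures_equal[OF pnc trit_oblivious] by metis
  have stat_eq: "stat P M x = measure_pmf.expectation (mu P) (\<lambda>l. pmf (xi M l) x)" for P M x
    using reproduces by (simp add: model_prob_def)
  have "(\<Sum>t\<in>{1,2,3}. \<Sum>b\<in>{0,1}. \<Sum>y\<in>{1,2,3}. stat (Prep t b) (Meas y) (cfun y t b)) \<le> 14"
    unfolding stat_eq
    by (rule oblivious_score_le_14[where resp = "\<lambda>y. xi (Meas y)" and nu = "mu (Mix 1)"])
      (use binary oblivious in auto)
  then show ?thesis by simp
qed

lemma Aobs_eigvecs_statistics:
  assumes eigvecs: "\<forall>t\<in>{1,2,3}. \<forall>b\<in>{0,1}.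
             cinner (psi t b) (psi t b) = 1 \<and> Aobs t *v psi t b = ((-1) ^ b) *s psi t b"
  shows "\<forall>t\<in>{1,2,3}. msc (1/2) (density (psi t 0) + density (psi t 1)) = msc (1/2) (mat 1)"
    and "(1/18) * (\<Sum>t\<in>{1,2,3}. \<Sum>b\<in>{0,1}. \<Sum>y\<in>{1,2,3}. born (psi t b) (Aobs y) (cfun y t b)) = 5/6"
proof -
  show "\<forall>t\<in>{1,2,3}. msc (1/2) (density (psi t 0) + density (psi t 1)) = msc (1/2) (mat 1)"
  proof
    fix t :: nat
    assume "t \<in> {1,2,3}"
    then have "density (psi t 0) + density (psi t 1) = mat 1"
      using eigvecs by (intro density_Aobs_eigvecs_sum[where t = t]) auto
    then show "msc (1/2) (density (psi t 0) + density (psi t 1)) = msc (1/2) (mat 1)" by simp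
  qed
  have "(\<Sum>t\<in>{1,2,3}. \<Sum>b\<in>{0,1}. \<Sum>y\<in>{1,2,3}. born (psi t b) (Aobs y) (cfun y t b))
      = (\<Sum>t\<in>{1,2,3::nat}. \<Sum>b\<in>{0,1::nat}. \<Sum>y\<in>{1,2,3::nat}. if y = t then 1 else 3/4 :: real)"
  proof (intro sum.cong refl)
    fix t b y :: nat
    assume "t \<in> {1,2,3}" "b \<in> {0,1}" "y \<in> {1,2,3}"
    then show "born (psi t b) (Aobs y) (cfun y t b) = (if y = t then 1 else 3/4)"
      using eigvecs born_target_outcome by blast
  qed
  also have "\<dots> = 15" by simp
  finally show "(1/18) * (\<Sum>t\<in>{1,2,3}. \<Sum>b\<in>{0,1}. \<Sum>y\<in>{1,2,3}.
                  born (psi t b) (Aobs y) (cfun y t b)) = 5/6" by simp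
qed

theorem mainTheorem7:
  fixes Prep :: "nat \<Rightarrow> nat \<Rightarrow> 'p" and Mix :: "nat \<Rightarrow> 'p" and Meas :: "nat \<Rightarrow> 'm"
    and stat :: "'p \<Rightarrow> 'm \<Rightarrow> nat \<Rightarrow> real"
    and mu :: "'p \<Rightarrow> 'l pmf" and xi :: "'m \<Rightarrow> 'l \<Rightarrow> nat pmf"
  assumes reproduces: "\<forall>P M x. stat P M x = model_prob mu xi P M x"
    and binary: "\<forall>y\<in>{1,2,3}. \<forall>l. set_pmf (xi (Meas y) l) \<subseteq> {0, 1}"
    and mixture: "\<forall>t\<in>{1,2,3}. \<forall>l. pmf (mu (Mix t)) l
                    = (1/2) * pmf (mu (Prep t 0)) l + (1/2) * pmf (mu (Prep t 1)) l"
    and trit_oblivious: "\<forall>M x. stat (Mix 1) M x = stat (Mix 2) M x \<and> stat (Mix 2) M x = stat (Mix 3) M x"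
    and pnc: "prep_noncontextual stat mu"
  shows "(1/18) * (\<Sum>t\<in>{1,2,3}. \<Sum>b\<in>{0,1}. \<Sum>y\<in>{1,2,3}. stat (Prep t b) (Meas y) (cfun y t b)) \<le> 7/9
    \<and> (\<exists>psi :: nat \<Rightarrow> nat \<Rightarrow> complex^2. \<forall>t\<in>{1,2,3}. \<forall>b\<in>{0,1}.
          cinner (psi t b) (psi t b) = 1 \<and> Aobs t *v psi t b = ((-1) ^ b) *s psi t b)
    \<and> (\<forall>psi :: nat \<Rightarrow> nat \<Rightarrow> complex^2.
         (\<forall>t\<in>{1,2,3}. \<forall>b\<in>{0,1}.
            cinner (psi t b) (psi t b) = 1 \<and> Aobs t *v psi t b = ((-1) ^ b) *s psi t b) \<longrightarrow>
         (\<forall>t\<in>{1,2,3}. msc (1/2) (density (psi t 0) + density (psi t 1))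
                          = msc (1/2) (mat 1))
         \<and> (1/18) * (\<Sum>t\<in>{1,2,3}. \<Sum>b\<in>{0,1}. \<Sum>y\<in>{1,2,3}.
                        born (psi t b) (Aobs y) (cfun y t b)) = 5/6)"
proof (intro conjI allI impI)
  show "(1/18) * (\<Sum>t\<in>{1,2,3}. \<Sum>b\<in>{0,1}. \<Sum>y\<in>{1,2,3}. stat (Prep t b) (Meas y) (cfun y t b)) \<le> 7/9"
    using noncontextual_R3_le[OF assms] .
  show "\<exists>psi :: nat \<Rightarrow> nat \<Rightarrow> complex^2. \<forall>t\<in>{1,2,3}. \<forall>b\<in>{0,1}.
             cinner (psi t b) (psi t b) = 1 \<and> Aobs t *v psi t b = ((-1) ^ b) *s psi t b"
    using Aobs_eigvec_is_eigvec by blast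
qed (fact Aobs_eigvecs_statistics)+

end
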